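(* Let $p$ be a prime, $m$ a positive integer, $e\geq2$, and $b\ge2$ an integer. Let $1\leq i\leq p^{e-1}$ be such that $i+b\leq p^e$ and $i\leq b$. Then $d_b(\mathcal{C}_i)=i+b$.
   Context: For $0\le i\le p^e$, $\mathcal{C}_i$ denotes the cyclic code $\langle (x-1)^i\rangle\subseteq \mathbb{F}_{p^m}[x]/\langle x^{p^e}-1\rangle$, with polynomials identified with their coefficient vectors in $\mathbb{F}_{p^m}^{p^e}$. For $c\in\mathbb{F}_{p^m}^{n}$, $\pi_b(c)$ is the list of the $n$ cyclically consecutive $b$-tuples $(c_j,\dots,c_{j+b-1})$ (indices mod $n$), $d_b(c,c')=d_H(\pi_b(c),\pi_b(c'))$, and $d_b(\mathcal{C})$ is the minimum of $d_b(c,c')$ over distinct $c,c'\in\mathcal{C}$. *)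

theory Defs
  imports "HOL-Computational_Algebra.Polynomial"
begin

text \<open>Words of length n over 'a are lists of length n; the word c corresponds to
  the polynomial Poly c = c_0 + c_1 x + ... + c_(n-1) x^(n-1).\<close>

definition cyc_code :: "nat \<Rightarrow> nat \<Rightarrow> ('a::field) list set" where
  "cyc_code n i = {c. length c = n \<and>
      (\<exists>g. Poly c = ([:-1, 1:] ^ i * g) mod (monom 1 n - 1))}"

definition b_read :: "nat \<Rightarrow> 'a list \<Rightarrow> 'a list list" where
  "b_read b c = map (\<lambda>j. map (\<lambda>k. c ! ((j + k) mod length c)) [0..<b]) [0..<length c]"

definition ham_dist :: "'a list \<Rightarrow> 'a list \<Rightarrow> nat" where
  "ham_dist u v = card {j. j < length u \<and> u ! j \<noteq> v ! j}"

definition b_dist :: "nat \<Rightarrow> 'a list \<Rightarrow> 'a list \<Rightarrow> nat" where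
  "b_dist b c c' = ham_dist (b_read b c) (b_read b c')"

definition min_b_dist :: "nat \<Rightarrow> 'a list set \<Rightarrow> nat" where
  "min_b_dist b C = Min {b_dist b c c' | c c'. c \<in> C \<and> c' \<in> C \<and> c \<noteq> c'}"

end

theory Submission
  imports "HOL-Number_Theory.Residues" Defs
  (* Residues comes first so that monom and smult denote the polynomial constants,
     not their namesakes from HOL-Algebra. *)
begin

(* Since (x - 1)^i divides x^(p^e) - 1 = (x - 1)^(p^e), the code C_i is cyclic with generator
   (x - 1)^i of degree i. The coefficient word of the generator meets at most i + b of the
   b-windows. Conversely, a nonzero codeword meeting every window has b-weight n >= i + b;
   otherwise some window is all zero, and a rotation (which stays in the code) moves it to the
   end, so the word starts with a nonzero entry and ends in at least b zeros. Its degree s is at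
   least i, and the i windows ending at position s and the b windows covering position 0 are
   distinct, which gives b-weight at least i + b. *)

definition b_weight :: "nat \<Rightarrow> 'a::zero list \<Rightarrow> nat" where
  "b_weight b w = card {j. j < length w \<and> (\<exists>t<b. w ! ((j + t) mod length w) \<noteq> 0)}"

lemma b_dist_eq_b_weight_diff:
  fixes c c' :: "'a::ab_group_add list"
  assumes "length c = length c'"
  shows "b_dist b c c' = b_weight b (map2 (-) c c')"
proof -
  have "map2 (-) c c' ! ((j + t) mod length c') = c ! ((j + t) mod length c') - c' ! ((j + t) mod length c')"
    if "j < length c'" for j t
  proof -
    have "(j + t) mod length c' < length c'" using that by (intro mod_less_divisor) linarith
    then show ?thesis using assms by simp
  qed
  then show ?thesis
    using assms unfolding b_dist_def ham_dist_def b_weight_def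
    by (auto simp: b_read_def intro!: arg_cong[where f = card]) blast+
qed

lemma b_weight_le_length: "b_weight b w \<le> length w"
proof -
  have "b_weight b w \<le> card {..<length w}"
    unfolding b_weight_def by (rule card_mono) auto
  then show ?thesis by simp
qed

lemma b_weight_rotate_le: "b_weight b (rotate k w) \<le> b_weight b w"
proof (cases "w = []")
  case False
  let ?n = "length w" and ?f = "\<lambda>j. (k + j) mod length w"
  have n: "0 < ?n" using False by simp
  have "inj_on ?f {..<?n}"
  proof (rule inj_onI)
    fix x y assume "x \<in> {..<?n}" "y \<in> {..<?n}" "?f x = ?f y"
    then show "x = y"
      by (metis cong_def cong_add_lcancel_nat cong_less_modulus_unique_nat lessThan_iff)
  qed
  moreover have "rotate k w ! ((j + t) mod ?n) = w ! ((?f j + t) mod ?n)" for j t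
  proof -
    have "(k + (j + t) mod ?n) mod ?n = (?f j + t) mod ?n"
      by (simp add: mod_add_right_eq mod_add_left_eq add.assoc)
    then show ?thesis using n by (simp add: nth_rotate)
  qed
  ultimately show ?thesis
    unfolding b_weight_def length_rotate
    by (intro card_inj_on_le[where f = ?f]) (auto intro: inj_on_subset simp: False)
qed simp

lemma b_weight_rotate: "b_weight b (rotate k w) = b_weight b w"
proof (rule antisym)
  have "rotate (length w - k mod length w) (rotate k w) = w"
  proof (cases "w = []")
    case False
    have "(length w - k mod length w + k) mod length w = (length w - k mod length w + k mod length w) mod length w"
      by (simp add: mod_add_right_eq)
    also have "\<dots> = 0" using False by simp
    finally show ?thesis by (simp add: rotate_rotate)
  qed simp
  then show "b_weight b w \<le> b_weight b (rotate k w)"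
    by (metis b_weight_rotate_le)
qed (rule b_weight_rotate_le)

lemma x_mult_Poly_rotate1:
  fixes w :: "'a::comm_ring_1 list"
  assumes "w \<noteq> []"
  shows "[:0, 1:] * Poly (rotate1 w) = Poly w + [:hd w:] * (monom 1 (length w) - 1)"
proof -
  obtain a v where w: "w = a # v" using assms by (cases w) auto
  have "[:0, 1:] * Poly (rotate1 w) = pCons 0 (Poly v) + monom a (Suc (length v))"
    by (simp add: w Poly_snoc monom_Suc algebra_simps)
  also have "\<dots> = Poly w + [:a:] * (monom 1 (length w) - 1)"
    by (simp add: w smult_monom algebra_simps)
  finally show ?thesis by (simp add: w)
qed

lemma dvd_Poly_rotate:
  fixes q :: "'a::comm_ring_1 poly"
  assumes "q dvd monom 1 (length w) - 1" and "q dvd Poly w"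
  shows "q dvd Poly (rotate k w)"
proof (induction k)
  case (Suc k)
  show ?case
  proof (cases "w = []")
    case False
    let ?v = "rotate k w" and ?M = "monom 1 (length w) - 1 :: 'a poly"
    \<comment> \<open>x^(n-1) inverts x modulo ?M, so the identity of x_mult_Poly_rotate1 can be solved
      for Poly (rotate1 ?v).\<close>
    have "Poly (rotate1 ?v) = monom 1 (length w - 1) * ([:0, 1:] * Poly (rotate1 ?v)) - ?M * Poly (rotate1 ?v)"
      using False by (cases "length w") (simp_all add: monom_Suc algebra_simps)
    also have "[:0, 1:] * Poly (rotate1 ?v) = Poly ?v + [:hd ?v:] * ?M"
      using x_mult_Poly_rotate1[of ?v] False by simp
    finally have "Poly (rotate1 ?v) = monom 1 (length w - 1) * (Poly ?v + [:hd ?v:] * ?M) - ?M * Poly (rotate1 ?v)" .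
    moreover have "q dvd monom 1 (length w - 1) * (Poly ?v + [:hd ?v:] * ?M) - ?M * Poly (rotate1 ?v)"
      by (rule dvd_diff[OF dvd_mult[OF dvd_add[OF Suc.IH dvd_mult[OF assms(1)]]] dvd_mult2[OF assms(1)]])
    ultimately show ?thesis by simp
  qed simp
qed (simp add: assms(2))

lemma b_weight_ge_of_two_nonzero:
  assumes "w ! 0 \<noteq> 0" and "w ! s \<noteq> 0" and "r \<le> s" and "r \<le> b" and "s + b < length w"
  shows "r + b \<le> b_weight b w"
proof (cases "b = 0")
  case False
  then have b: "0 < b" by simp
  let ?n = "length w"
  let ?W = "{j. j < ?n \<and> (\<exists>t<b. w ! ((j + t) mod ?n) \<noteq> 0)}"
  have "{s + 1 - r..s} \<subseteq> ?W"
  proof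
    fix j assume j: "j \<in> {s + 1 - r..s}"
    then have "s - j < b" "j + (s - j) = s" "j < ?n" using assms(3-5) by auto
    then show "j \<in> ?W" using assms(2,5) by (intro CollectI conjI exI[of _ "s - j"]) simp_all
  qed
  moreover have "insert 0 {?n + 1 - b..<?n} \<subseteq> ?W"
  proof
    fix j assume j: "j \<in> insert 0 {?n + 1 - b..<?n}"
    show "j \<in> ?W"
    proof (cases "j = 0")
      case True
      moreover have "0 < ?n" using assms(5) by linarith
      ultimately show ?thesis using assms(1) b by (intro CollectI conjI exI[of _ 0]) simp_all
    next
      case False
      with j have "j < ?n" "?n - j < b" "j + (?n - j) = ?n" by auto
      then show ?thesis using assms(1) by (intro CollectI conjI exI[of _ "?n - j"]) simp_all
    qed
  qed
  ultimately have "{s + 1 - r..s} \<union> insert 0 {?n + 1 - b..<?n} \<subseteq> ?W" by blast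
  then have "card ({s + 1 - r..s} \<union> insert 0 {?n + 1 - b..<?n}) \<le> b_weight b w"
    unfolding b_weight_def by (intro card_mono) auto
  moreover have "card ({s + 1 - r..s} \<union> insert 0 {?n + 1 - b..<?n}) = r + b"
  proof -
    have "{s + 1 - r..s} \<inter> insert 0 {?n + 1 - b..<?n} = {}" using assms(3,5) by auto
    moreover have "card (insert 0 {?n + 1 - b..<?n}) = b" using b assms(5) by simp
    ultimately show ?thesis using assms(3) by (subst card_Un_disjoint) simp_all
  qed
  ultimately show ?thesis by simp
qed (use assms(4) in simp)

lemma b_weight_ge_of_nonzero_head_zero_tail:
  assumes "a \<noteq> 0" and "set zs \<subseteq> {0}" and "b \<le> length zs"
    and "r \<le> degree (Poly ((a # ys) @ zs))" and "r \<le> b"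
  shows "r + b \<le> b_weight b ((a # ys) @ zs)"
proof -
  let ?v = "(a # ys) @ zs"
  define s where "s = degree (Poly ?v)"
  have "coeff (Poly ?v) 0 \<noteq> 0" using assms(1) by simp
  then have "coeff (Poly ?v) s \<noteq> 0" unfolding s_def by (intro leading_coeff_neq_0) auto
  then have "nth_default 0 ?v s \<noteq> 0" by (metis coeff_Poly_eq)
  then have vs: "s < length ?v" "?v ! s \<noteq> 0" by (auto simp: nth_default_def split: if_splits)
  have "s \<le> length ys"
  proof (rule ccontr)
    assume "\<not> s \<le> length ys"
    then have "?v ! s \<in> set zs" using vs(1) by (auto simp: nth_append)
    with vs(2) assms(2) show False by auto
  qed
  show ?thesis
  proof (rule b_weight_ge_of_two_nonzero)
    show "s + b < length ?v" using \<open>s \<le> length ys\<close> assms(3) by simp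
  qed (use vs assms(1,4,5) s_def in auto)
qed

lemma b_weight_le_of_zero_tail:
  assumes "\<And>k. r < k \<Longrightarrow> k < length w \<Longrightarrow> w ! k = 0" and "0 < b"
  shows "b_weight b w \<le> r + b"
proof -
  let ?n = "length w"
  have "{j. j < ?n \<and> (\<exists>t<b. w ! ((j + t) mod ?n) \<noteq> 0)} \<subseteq> {..r} \<union> {?n + 1 - b..<?n}"
  proof
    fix j assume "j \<in> {j. j < ?n \<and> (\<exists>t<b. w ! ((j + t) mod ?n) \<noteq> 0)}"
    then obtain t where j: "j < ?n" "t < b" "w ! ((j + t) mod ?n) \<noteq> 0" by blast
    then have "(j + t) mod ?n < ?n" by (intro mod_less_divisor) linarith
    with j(3) have "(j + t) mod ?n \<le> r" using assms(1) not_le by blast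
    then show "j \<in> {..r} \<union> {?n + 1 - b..<?n}"
      using j(1,2) by (cases "j + t < ?n") auto
  qed
  then have "b_weight b w \<le> card ({..r} \<union> {?n + 1 - b..<?n})"
    unfolding b_weight_def by (intro card_mono) auto
  also have "\<dots> \<le> card {..r} + card {?n + 1 - b..<?n}" by (rule card_Un_le)
  also have "\<dots> \<le> r + b" using assms(2) by simp
  finally show ?thesis .
qed

lemma rotate_to_zero_tail:
  assumes "j < length w" and "\<And>t. t < b \<Longrightarrow> w ! ((j + t) mod length w) = 0"
    and "x \<in> set w" and "x \<noteq> 0"
  obtains k a ys zs where "rotate k w = (a # ys) @ zs" and "a \<noteq> 0"
    and "set zs \<subseteq> {0}" and "b \<le> length zs"
proof -
  let ?u = "rotate j w"
  let ?zs = "takeWhile (\<lambda>x. x = 0) ?u" and ?rest = "dropWhile (\<lambda>x. x = 0) ?u"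
  have prefix: "y = 0" if y: "y \<in> set (take b ?u)" for y
  proof -
    obtain t where t: "t < length (take b ?u)" "y = take b ?u ! t"
      using y by (auto simp: in_set_conv_nth)
    then have "t < b" "t < length w" by simp_all
    then have "y = w ! ((j + t) mod length w)" using t(2) by (simp add: nth_rotate)
    then show "y = 0" using assms(2)[OF \<open>t < b\<close>] by simp
  qed
  have "takeWhile (\<lambda>x. x = 0) (take b ?u @ drop b ?u) = take b ?u @ takeWhile (\<lambda>x. x = 0) (drop b ?u)"
    by (rule takeWhile_append2) (rule prefix)
  moreover have "dropWhile (\<lambda>x. x = 0) (take b ?u @ drop b ?u) = dropWhile (\<lambda>x. x = 0) (drop b ?u)"
    by (rule dropWhile_append2) (rule prefix)
  ultimately have zs: "?zs = take b ?u @ takeWhile (\<lambda>x. x = 0) (drop b ?u)"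
    and rest: "?rest = dropWhile (\<lambda>x. x = 0) (drop b ?u)"
    by simp_all
  have "?rest \<noteq> []" using assms(3,4) by auto
  then obtain a ys where a: "?rest = a # ys" by (metis list.exhaust)
  have "a \<noteq> 0" using hd_dropWhile[OF \<open>?rest \<noteq> []\<close>] a by simp
  have "b \<le> length w"
  proof (rule ccontr)
    assume "\<not> b \<le> length w"
    then show False using \<open>?rest \<noteq> []\<close> rest by simp
  qed
  then have "b \<le> length ?zs" unfolding zs by simp
  moreover have "set ?zs \<subseteq> {0}" by (auto dest: set_takeWhileD)
  moreover have "rotate (length ?zs) ?u = ?rest @ ?zs"
    by (metis rotate_append takeWhile_dropWhile_id)
  then have "rotate (length ?zs + j) w = (a # ys) @ ?zs"
    using a by (simp add: rotate_rotate)
  ultimately show ?thesis using that \<open>a \<noteq> 0\<close> by blast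
qed

lemma b_weight_ge_of_dvd_Poly:
  fixes q :: "'a::idom poly"
  assumes "q dvd monom 1 (length w) - 1" and "q dvd Poly w" and "Poly w \<noteq> 0"
    and "degree q \<le> b" and "degree q + b \<le> length w"
  shows "degree q + b \<le> b_weight b w"
proof (cases "\<forall>j < length w. \<exists>t<b. w ! ((j + t) mod length w) \<noteq> 0")
  case True
  then have "{j. j < length w \<and> (\<exists>t<b. w ! ((j + t) mod length w) \<noteq> 0)} = {..<length w}"
    by auto
  then have "b_weight b w = length w" by (simp add: b_weight_def)
  then show ?thesis using assms(5) by simp
next
  case False
  then obtain j where "j < length w" "\<And>t. t < b \<Longrightarrow> w ! ((j + t) mod length w) = 0"
    by blast
  moreover obtain x where "x \<in> set w" "x \<noteq> 0"
    using assms(3) by (metis Poly_replicate_0 replicate_eqI)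
  ultimately obtain k a ys zs where v: "rotate k w = (a # ys) @ zs" and "a \<noteq> 0"
    and "set zs \<subseteq> {0}" and "b \<le> length zs"
    by (rule rotate_to_zero_tail)
  have "coeff (Poly (rotate k w)) 0 = a" by (simp add: v)
  then have "Poly (rotate k w) \<noteq> 0" using \<open>a \<noteq> 0\<close> by (metis coeff_0)
  then have "degree q \<le> degree (Poly (rotate k w))"
    using dvd_Poly_rotate[OF assms(1,2)] by (intro dvd_imp_degree_le)
  then have "degree q + b \<le> b_weight b ((a # ys) @ zs)"
    using \<open>a \<noteq> 0\<close> \<open>set zs \<subseteq> {0}\<close> \<open>b \<le> length zs\<close> assms(4) v
    by (intro b_weight_ge_of_nonzero_head_zero_tail) simp_all
  then show ?thesis by (metis v b_weight_rotate)
qed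

lemma Poly_map2_minus:
  fixes c c' :: "'a::ab_group_add list"
  assumes "length c = length c'"
  shows "Poly (map2 (-) c c') = Poly c - Poly c'"
  using assms by (intro poly_eqI) (simp add: nth_default_def)

lemma Poly_inj_same_length:
  assumes "length c = length c'" and "Poly c = Poly c'"
  shows "c = c'"
proof (rule nth_equalityI)
  fix k assume "k < length c"
  then show "c ! k = c' ! k"
    using arg_cong[OF assms(2), of "\<lambda>p. coeff p k"] assms(1) by (simp add: nth_default_def)
qed (fact assms(1))

lemma cyc_code_dvd_Poly:
  fixes c :: "'a::field list"
  assumes "[:-1, 1:] ^ i dvd (monom 1 n - 1 :: 'a poly)" and "c \<in> cyc_code n i"
  shows "[:-1, 1:] ^ i dvd Poly c"
proof -
  obtain g where "Poly c = ([:-1, 1:] ^ i * g) mod (monom 1 n - 1)"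
    using assms(2) unfolding cyc_code_def by auto
  then show ?thesis by (simp add: dvd_mod_iff[OF assms(1)])
qed

lemma Poly_map_coeff_upt:
  assumes "degree p < n"
  shows "Poly (map (coeff p) [0..<n]) = p"
  using assms by (intro poly_eqI) (auto simp: nth_default_def coeff_eq_0)

lemma generator_word_mem_cyc_code:
  assumes "i < n"
  shows "map (coeff ([:-1, 1:] ^ i)) [0..<n] \<in> (cyc_code n i :: 'a::field list set)"
proof -
  let ?q = "[:-1, 1:] ^ i :: 'a poly"
  have "Poly (map (coeff ?q) [0..<n]) = ?q"
    using assms by (intro Poly_map_coeff_upt) (simp add: degree_linear_power)
  moreover have "degree ?q < degree (monom 1 n - 1 :: 'a poly)"
    using assms degree_add_eq_left[of "-1" "monom 1 n :: 'a poly"]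
    by (simp add: degree_linear_power degree_monom_eq)
  ultimately show ?thesis
    unfolding cyc_code_def by (intro CollectI conjI exI[of _ 1]) (simp_all add: mod_poly_less)
qed

lemma b_dist_ge_cyc_code:
  fixes c c' :: "'a::field list"
  assumes "[:-1, 1:] ^ i dvd (monom 1 n - 1 :: 'a poly)" and "i \<le> b" and "i + b \<le> n"
    and "c \<in> cyc_code n i" and "c' \<in> cyc_code n i" and "c \<noteq> c'"
  shows "i + b \<le> b_dist b c c'"
proof -
  let ?w = "map2 (-) c c'"
  have len: "length c = n" "length c' = n" using assms(4,5) by (simp_all add: cyc_code_def)
  have "Poly ?w = Poly c - Poly c'" using len by (simp add: Poly_map2_minus)
  moreover have "Poly c \<noteq> Poly c'" using Poly_inj_same_length len assms(6) by metis
  moreover have "[:-1, 1:] ^ i dvd Poly c" "[:-1, 1:] ^ i dvd Poly c'"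
    using cyc_code_dvd_Poly[OF assms(1)] assms(4,5) by simp_all
  ultimately have "[:-1, 1:] ^ i dvd Poly ?w" "Poly ?w \<noteq> 0" by simp_all
  moreover have "length ?w = n" using len by simp
  ultimately have "degree ([:-1, 1:] ^ i :: 'a poly) + b \<le> b_weight b ?w"
    using assms(1-3) by (intro b_weight_ge_of_dvd_Poly) (simp_all add: degree_linear_power)
  then show ?thesis using len by (simp add: b_dist_eq_b_weight_diff degree_linear_power)
qed

lemma b_dist_generator_word_le:
  assumes "0 < b"
  shows "b_dist b (map (coeff ([:-1, 1:] ^ i :: 'a::field poly)) [0..<n]) (replicate n 0) \<le> i + b"
proof -
  let ?g = "map (coeff ([:-1, 1:] ^ i :: 'a poly)) [0..<n]"
  have "map2 (-) ?g (replicate n 0) = ?g" by (simp add: list_eq_iff_nth_eq)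
  moreover have "?g ! k = 0" if "i < k" "k < length ?g" for k
    using that by (simp add: coeff_eq_0 degree_linear_power)
  then have "b_weight b ?g \<le> i + b" using assms by (rule b_weight_le_of_zero_tail)
  ultimately show ?thesis by (simp add: b_dist_eq_b_weight_diff)
qed

lemma min_b_dist_cyc_code:
  assumes "[:-1, 1:] ^ i dvd (monom 1 n - 1 :: 'a::field poly)" and "0 < b" and "i \<le> b" and "i + b \<le> n"
  shows "min_b_dist b (cyc_code n i :: 'a list set) = i + b"
  unfolding min_b_dist_def
proof (rule Min_eqI)
  let ?C = "cyc_code n i :: 'a list set"
  let ?g = "map (coeff ([:-1, 1:] ^ i :: 'a poly)) [0..<n]"
  have len: "length c = n" if "c \<in> ?C" for c using that by (simp add: cyc_code_def)
  show "finite {b_dist b c c' | c c'. c \<in> ?C \<and> c' \<in> ?C \<and> c \<noteq> c'}"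
  proof (rule finite_subset)
    show "{b_dist b c c' | c c'. c \<in> ?C \<and> c' \<in> ?C \<and> c \<noteq> c'} \<subseteq> {..n}"
      using len by (auto simp: b_dist_eq_b_weight_diff intro!: order.trans[OF b_weight_le_length])
  qed simp
  show "i + b \<le> d" if "d \<in> {b_dist b c c' | c c'. c \<in> ?C \<and> c' \<in> ?C \<and> c \<noteq> c'}" for d
    using that b_dist_ge_cyc_code[OF assms(1,3,4)] by blast
  have "?g \<in> ?C" using assms(2,4) by (intro generator_word_mem_cyc_code) simp
  moreover have "replicate n 0 \<in> ?C" by (auto simp: cyc_code_def intro: exI[of _ 0])
  moreover have "?g \<noteq> replicate n 0"
  proof
    assume "?g = replicate n 0"
    then have "Poly ?g = 0" by simp
    moreover have "Poly ?g = [:-1, 1:] ^ i"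
      using assms(2,4) by (intro Poly_map_coeff_upt) (simp add: degree_linear_power)
    ultimately show False by simp
  qed
  ultimately have "b_dist b ?g (replicate n 0) = i + b"
    using b_dist_generator_word_le[where 'a = 'a and i = i and n = n, OF assms(2)]
      b_dist_ge_cyc_code[OF assms(1,3,4)] by (simp add: antisym)
  with \<open>?g \<in> ?C\<close> \<open>replicate n 0 \<in> ?C\<close> \<open>?g \<noteq> replicate n 0\<close>
  show "i + b \<in> {b_dist b c c' | c c'. c \<in> ?C \<and> c' \<in> ?C \<and> c \<noteq> c'}" by force
qed

lemma CHAR_eq_of_card_prime_power:
  assumes "prime p" and "card (UNIV :: 'a::{finite,field} set) = p ^ m"
  shows "CHAR('a) = p"
proof -
  have "prime CHAR('a)" by (simp add: finite_imp_CHAR_pos prime_CHAR_semidom)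
  moreover have "CHAR('a) dvd p ^ m" using CHAR_dvd_CARD[where 'a = 'a] assms(2) by simp
  ultimately show ?thesis using assms(1) by (metis prime_dvd_power primes_dvd_imp_eq)
qed

lemma monom_CHAR_power_minus_one:
  assumes "prime CHAR('a::comm_ring_1)"
  shows "(monom 1 (CHAR('a) ^ e) - 1 :: 'a poly) = [:-1, 1:] ^ (CHAR('a) ^ e)"
proof -
  have "([:-1, 1:] + 1 :: 'a poly) ^ (CHAR('a) ^ e) = [:-1, 1:] ^ (CHAR('a) ^ e) + 1"
    using assms by (simp add: freshmans_dream')
  moreover have "[:-1, 1:] + 1 = ([:0, 1:] :: 'a poly)" by (simp add: one_pCons)
  ultimately show ?thesis by (simp add: monom_altdef)
qed

theorem theorem2p8:
  fixes p m e b i :: nat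
  assumes "prime p" and "m > 0" and "card (UNIV :: 'a::{finite,field} set) = p ^ m"
    and "e \<ge> 2" and "b \<ge> 2"
    and "1 \<le> i" and "i \<le> p ^ (e - 1)" and "i + b \<le> p ^ e" and "i \<le> b"
  shows "min_b_dist b (cyc_code (p ^ e) i :: 'a list set) = i + b"
proof -
  have "CHAR('a) = p" using assms(1,3) by (rule CHAR_eq_of_card_prime_power)
  then have "(monom 1 (p ^ e) - 1 :: 'a poly) = [:-1, 1:] ^ (p ^ e)"
    using monom_CHAR_power_minus_one[where 'a = 'a] assms(1) by simp
  then have "[:-1, 1:] ^ i dvd (monom 1 (p ^ e) - 1 :: 'a poly)"
    using assms(8) by (simp add: le_imp_power_dvd)
  then show ?thesis using assms(5,8,9) by (intro min_b_dist_cyc_code) simp_all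
qed

end
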